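(* There exist Euclidean self-orthogonal linear codes with each of the following parameters: over $\mathbb{F}_4$: $[8,2,4]_4$, $[8,3,4]_4$, $[8,4,4]_4$; over $\mathbb{F}_8$: $[8,3,4]_8$, $[8,4,4]_8$, $[10,4,5]_8$, $[10,5,4]_8$, $[12,4,6]_8$, $[12,5,6]_8$, $[12,6,5]_8$, $[14,5,7]_8$, $[14,6,6]_8$, $[14,7,6]_8$, $[16,5,8]_8$, $[16,6,8]_8$, $[16,7,6]_8$, $[16,8,6]_8$.
   Context: $[n,k,d]_q$ denotes a linear code over $\mathbb{F}_q$ of length $n$, dimension $k$, minimum Hamming distance $d$. A code $\mathcal{C}$ is Euclidean self-orthogonal if $\mathcal{C}\subseteq\mathcal{C}^{\perp_E}$, where $\perp_E$ is the dual under $\sum_ix_iy_i$ (self-dual when equality holds). *)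

theory Defs
  imports "HOL-Analysis.Cartesian_Space" "HOL-Library.Numeral_Type"
begin

text \<open>Codes of length n over a finite field 'a are subsets of 'a^'n, where the
  length n is CARD('n). A linear [n,k,d]_q code is a subspace of dimension k whose
  minimum Hamming distance is d.\<close>

definition hamming_dist :: "'a::zero ^ 'n \<Rightarrow> 'a ^ 'n \<Rightarrow> nat" where
  "hamming_dist x y = card {i. x $ i \<noteq> y $ i}"

definition min_dist :: "('a::zero ^ 'n) set \<Rightarrow> nat" where
  "min_dist C = Min {hamming_dist x y | x y. x \<in> C \<and> y \<in> C \<and> x \<noteq> y}"

definition euclid_dual :: "('a::field ^ 'n) set \<Rightarrow> ('a ^ 'n) set" where
  "euclid_dual C = {y. \<forall>x\<in>C. (\<Sum>i\<in>UNIV. x $ i * y $ i) = 0}"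

definition self_orthogonal :: "('a::field ^ 'n) set \<Rightarrow> bool" where
  "self_orthogonal C \<longleftrightarrow> C \<subseteq> euclid_dual C"

definition linear_code :: "('a::field ^ 'n) set \<Rightarrow> nat \<Rightarrow> nat \<Rightarrow> bool" where
  "linear_code C k d \<longleftrightarrow> vec.subspace C \<and> vec.dim C = k \<and> min_dist C = d"

definition has_SO_code :: "'a::{field,finite} itself \<Rightarrow> 'n::finite itself \<Rightarrow> nat \<Rightarrow> nat \<Rightarrow> bool" where
  "has_SO_code _ _ k d \<longleftrightarrow> (\<exists>C :: ('a ^ 'n) set. linear_code C k d \<and> self_orthogonal C)"

end

theory Submission
  imports Defs "HOL-Computational_Algebra.Polynomial"
begin

text \<open>
  All codes are Plotkin sums (u | u + v) of two generalized Reed-Solomon codes over a field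
  F_q with q even. Fix m \<le> q points S and let W be the product of the X - z for z \<notin> S,
  a polynomial of degree q - m vanishing exactly off S. Squaring is bijective in
  characteristic 2, so W = \<mu>^2 pointwise for some \<mu> that is nonzero on S. The code consists
  of the words (\<mu>(x) f(x) | \<mu>(x) (f + g)(x)) for x \<in> S, with deg f < k_a and deg g < k_b;
  it has length 2m, dimension k_a + k_b, and the root bound for f and g gives the Plotkin
  minimum distance min (2 (m + 1 - k_a)) (m + 1 - k_b).

  The inner product of two codewords is the sum over x \<in> S of W(x) (f g' + g f' + g g')(x),
  the cross term 2 f f' vanishing in characteristic 2. As W vanishes off S, this is the sum
  over all of F_q of a polynomial of degree at most q - 2, hence 0, because the power sums
  of x^j over F_q vanish for j < q - 1.
\<close>

section \<open>Finite fields\<close>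

lemma of_nat_card_eq_0: "of_nat CARD('a::{ring_1,finite}) = (0::'a)"
proof -
  have "(\<Sum>x\<in>UNIV. x) = (\<Sum>x\<in>UNIV. x + (1::'a))"
    by (rule sum.reindex_bij_witness[of _ "\<lambda>x. x + 1" "\<lambda>x. x - 1"]) auto
  also have "\<dots> = (\<Sum>x\<in>UNIV. x) + of_nat CARD('a)"
    by (simp add: sum.distrib)
  finally show ?thesis by simp
qed

lemma power_card_minus_one_eq_1:
  fixes a :: "'a::{field,finite}"
  assumes "a \<noteq> 0"
  shows "a ^ (CARD('a) - 1) = 1"
proof -
  let ?U = "UNIV - {0::'a}"
  have "\<Prod>?U = (\<Prod>x\<in>?U. a * x)"
    by (rule prod.reindex_bij_witness[of _ "\<lambda>x. a * x" "\<lambda>x. x / a"]) (use assms in auto)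
  also have "\<dots> = a ^ (CARD('a) - 1) * \<Prod>?U"
    by (simp add: prod.distrib card_Diff_singleton)
  finally show ?thesis by simp
qed

lemma even_card_imp_two_eq_0:
  assumes "even CARD('a::{field,finite})"
  shows "(2::'a) = 0"
proof -
  have "odd (CARD('a) - 1)"
    using assms finite_UNIV_card_ge_0[where 'a='a] by simp
  then have "(-1::'a) = (-1) ^ (CARD('a) - 1)" by simp
  also have "\<dots> = 1" by (rule power_card_minus_one_eq_1) simp
  finally show ?thesis by (metis add.right_inverse one_add_one)
qed

lemma exists_square_root_fun:
  fixes f :: "'b \<Rightarrow> 'a::{field,finite}"
  assumes "even CARD('a)"
  obtains r where "\<And>x. r x * r x = f x"
proof -
  have "inj (\<lambda>y::'a. y * y)"
  proof (rule injI)
    fix x y :: 'a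
    assume "x * x = y * y"
    moreover have "(x - y) * (x - y) = x * x - y * y - 2 * (y * (x - y))"
      by (simp add: algebra_simps)
    ultimately show "x = y"
      using even_card_imp_two_eq_0[OF assms] by simp
  qed
  then have "surj (\<lambda>y::'a. y * y)"
    by (simp add: finite_UNIV_inj_surj)
  then show ?thesis
    using that[of "\<lambda>x. inv (\<lambda>y. y * y) (f x)"] surj_f_inv_f by fastforce
qed

section \<open>Polynomials over finite fields\<close>

lemma card_nonroots_ge:
  fixes p :: "'a::idom poly"
  assumes "p \<noteq> 0" and "finite S"
  shows "card S - degree p \<le> card {x\<in>S. poly p x \<noteq> 0}"
proof -
  have "card {x\<in>S. poly p x = 0} \<le> card {x. poly p x = 0}"
    using assms(1) by (intro card_mono poly_roots_finite) auto
  also have "\<dots> \<le> degree p"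
    using assms(1) by (rule card_poly_roots_bound)
  finally have "card {x\<in>S. poly p x = 0} \<le> degree p" .
  moreover have "card S \<le> card ({x\<in>S. poly p x = 0} \<union> {x\<in>S. poly p x \<noteq> 0})"
    using assms(2) by (intro card_mono) auto
  moreover note card_Un_le[of "{x\<in>S. poly p x = 0}" "{x\<in>S. poly p x \<noteq> 0}"]
  ultimately show ?thesis by linarith
qed

lemma sum_UNIV_power_eq_0:
  assumes "j < CARD('a::{field,finite}) - 1"
  shows "(\<Sum>x\<in>UNIV. (x::'a) ^ j) = 0"
proof (cases "j = 0")
  case True
  then show ?thesis by (simp add: of_nat_card_eq_0)
next
  case False
  let ?P = "monom (1::'a) j - 1"
  have "coeff ?P j = 1"
    using False by simp
  then have "?P \<noteq> 0"
    by (metis coeff_0 zero_neq_one)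
  moreover have "degree ?P \<le> j"
    by (intro degree_diff_le) (auto simp: degree_monom_le)
  ultimately have "CARD('a) - 1 - j \<le> card {x\<in>UNIV - {0}. poly ?P x \<noteq> 0}"
    using card_nonroots_ge[of ?P "UNIV - {0}"] by (simp add: card_Diff_singleton)
  with assms have "{x\<in>UNIV - {0}. poly ?P x \<noteq> 0} \<noteq> {}"
    by (metis card.empty le_zero_eq zero_less_diff not_less)
  then obtain a :: 'a where "a \<noteq> 0" "a ^ j \<noteq> 1"
    by (auto simp: poly_monom)
  have "(\<Sum>x\<in>UNIV. x ^ j) = (\<Sum>x\<in>UNIV. (a * x) ^ j)"
    by (rule sum.reindex_bij_witness[of _ "\<lambda>x. a * x" "\<lambda>x. x / a"]) (use \<open>a \<noteq> 0\<close> in auto)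
  also have "\<dots> = a ^ j * (\<Sum>x\<in>UNIV. x ^ j)"
    by (simp add: power_mult_distrib sum_distrib_left)
  finally have "(a ^ j - 1) * (\<Sum>x\<in>UNIV. x ^ j) = 0"
    by (simp add: algebra_simps)
  with \<open>a ^ j \<noteq> 1\<close> show ?thesis by simp
qed

lemma sum_UNIV_poly_eq_0:
  fixes p :: "'a::{field,finite} poly"
  assumes "degree p < CARD('a) - 1"
  shows "(\<Sum>x\<in>UNIV. poly p x) = 0"
proof -
  have "(\<Sum>x\<in>UNIV. poly p x) = (\<Sum>x\<in>UNIV. \<Sum>i\<le>degree p. coeff p i * x ^ i)"
    by (simp add: poly_altdef)
  also have "\<dots> = (\<Sum>i\<le>degree p. coeff p i * (\<Sum>x\<in>UNIV. x ^ i))"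
    by (subst sum.swap) (simp add: sum_distrib_left)
  also have "\<dots> = 0"
    using assms by (intro sum.neutral) (auto simp: sum_UNIV_power_eq_0)
  finally show ?thesis .
qed

definition vanishing_poly :: "'a set \<Rightarrow> 'a::comm_ring_1 poly" where
  "vanishing_poly Z = (\<Prod>z\<in>Z. [:-z, 1:])"

lemma poly_vanishing_poly_eq_0_iff:
  "finite Z \<Longrightarrow> poly (vanishing_poly Z) x = 0 \<longleftrightarrow> x \<in> (Z :: 'a::idom set)"
  by (simp add: vanishing_poly_def poly_prod)

lemma vanishing_poly_nonzero [simp]: "vanishing_poly Z \<noteq> (0 :: 'a::idom poly)"
  by (cases "finite Z") (simp_all add: vanishing_poly_def)

lemma degree_vanishing_poly_le: "degree (vanishing_poly Z) \<le> card Z"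
  using degree_prod_sum_le[of Z "\<lambda>z. [:-z, 1:]"]
  by (cases "finite Z") (simp_all add: vanishing_poly_def)

lemma sum_vanishing_poly_mult_eq_0:
  fixes S :: "'a::{field,finite} set" and f :: "'a poly"
  assumes "degree f + 2 \<le> card S"
  shows "(\<Sum>x\<in>S. poly (vanishing_poly (- S)) x * poly f x) = 0"
proof -
  let ?W = "vanishing_poly (- S)"
  have "card (- S) = CARD('a) - card S"
    by (simp add: Compl_eq_Diff_UNIV card_Diff_subset)
  then have "degree (?W * f) < CARD('a) - 1"
    using assms degree_mult_le[of ?W f] degree_vanishing_poly_le[of "- S"] card_mono[of UNIV S]
    by simp
  have "(\<Sum>x\<in>S. poly ?W x * poly f x) = (\<Sum>x\<in>UNIV. poly (?W * f) x)"
    by (intro sum.mono_neutral_cong_left) (auto simp: poly_vanishing_poly_eq_0_iff)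
  also have "\<dots> = 0"
    by (rule sum_UNIV_poly_eq_0) fact
  finally show ?thesis .
qed

lemma exists_poly_card_nonroots_eq:
  fixes S :: "'a::idom set"
  assumes "finite S" and "0 < k" and "k \<le> card S + 1"
  obtains p :: "'a poly"
  where "p \<noteq> 0" "degree p < k" "card {x\<in>S. poly p x \<noteq> 0} = card S + 1 - k"
proof -
  have "k - 1 \<le> card S"
    using assms(3) by simp
  then obtain Z where Z: "Z \<subseteq> S" "card Z = k - 1" and "finite Z"
    by (rule obtain_subset_with_card_n)
  have "{x\<in>S. poly (vanishing_poly Z) x \<noteq> 0} = S - Z"
    using \<open>finite Z\<close> by (auto simp: poly_vanishing_poly_eq_0_iff)
  then show ?thesis
    using that[of "vanishing_poly Z"] degree_vanishing_poly_le[of Z] Z \<open>finite Z\<close> assms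
    by (simp add: card_Diff_subset)
qed

section \<open>The (u | u + v) construction on polynomial codes\<close>

lemma plotkin_card_nonroots_ge:
  fixes a b :: "'a::idom poly"
  assumes "finite S" and "degree a < ka" and "degree b < kb" and "a \<noteq> 0 \<or> b \<noteq> 0"
  shows "min (2 * (card S + 1 - ka)) (card S + 1 - kb)
           \<le> card {x\<in>S. poly a x \<noteq> 0} + card {x\<in>S. poly (a + b) x \<noteq> 0}"
proof (cases "b = 0")
  case True
  then have "card S + 1 - ka \<le> card {x\<in>S. poly a x \<noteq> 0}"
    using assms card_nonroots_ge[of a S] by linarith
  with True show ?thesis by simp
next
  case False
  have "card S + 1 - kb \<le> card {x\<in>S. poly b x \<noteq> 0}"
    using False assms card_nonroots_ge[of b S] by linarith
  also have "\<dots> \<le> card ({x\<in>S. poly a x \<noteq> 0} \<union> {x\<in>S. poly (a + b) x \<noteq> 0})"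
    using assms(1) by (intro card_mono) auto
  also have "\<dots> \<le> card {x\<in>S. poly a x \<noteq> 0} + card {x\<in>S. poly (a + b) x \<noteq> 0}"
    by (rule card_Un_le)
  finally show ?thesis by simp
qed

lemma plotkin_card_nonroots_attained:
  fixes S :: "'a::idom set"
  assumes "finite S" and "0 < ka" "0 < kb" and "ka \<le> card S + 1" "kb \<le> card S + 1"
  obtains a b :: "'a poly"
  where "degree a < ka" "degree b < kb" "a \<noteq> 0 \<or> b \<noteq> 0"
    and "card {x\<in>S. poly a x \<noteq> 0} + card {x\<in>S. poly (a + b) x \<noteq> 0}
           = min (2 * (card S + 1 - ka)) (card S + 1 - kb)"
proof (cases "2 * (card S + 1 - ka) \<le> card S + 1 - kb")
  case True
  obtain p :: "'a poly"
    where "p \<noteq> 0" "degree p < ka" "card {x\<in>S. poly p x \<noteq> 0} = card S + 1 - ka"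
    using exists_poly_card_nonroots_eq assms by blast
  with True assms show ?thesis
    using that[of p 0] by simp
next
  case False
  obtain p :: "'a poly"
    where "p \<noteq> 0" "degree p < kb" "card {x\<in>S. poly p x \<noteq> 0} = card S + 1 - kb"
    using exists_poly_card_nonroots_eq assms by blast
  with False assms show ?thesis
    using that[of 0 p] by simp
qed

definition plotkin_word :: "('a \<Rightarrow> 'a) \<Rightarrow> 'a::comm_ring_1 poly \<Rightarrow> 'a poly \<Rightarrow> 'a \<times> bool \<Rightarrow> 'a" where
  "plotkin_word \<mu> a b = (\<lambda>(x, second). \<mu> x * poly (if second then a + b else a) x)"

lemma plotkin_word_add:
  "plotkin_word \<mu> (a + a') (b + b') p = plotkin_word \<mu> a b p + plotkin_word \<mu> a' b' p"
  by (cases p) (simp add: plotkin_word_def algebra_simps)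

lemma plotkin_word_smult:
  "plotkin_word \<mu> (smult r a) (smult r b) p = r * plotkin_word \<mu> a b p"
  by (cases p) (simp add: plotkin_word_def algebra_simps flip: smult_add_right)

lemma card_plotkin_word_nonzero:
  fixes S :: "'a::idom set"
  assumes "finite S" and "\<And>x. x \<in> S \<Longrightarrow> \<mu> x \<noteq> 0"
  shows "card {p\<in>S \<times> UNIV. plotkin_word \<mu> a b p \<noteq> 0}
           = card {x\<in>S. poly a x \<noteq> 0} + card {x\<in>S. poly (a + b) x \<noteq> 0}"
proof -
  let ?U = "{x\<in>S. poly a x \<noteq> 0}" and ?V = "{x\<in>S. poly (a + b) x \<noteq> 0}"
  have "{p\<in>S \<times> UNIV. plotkin_word \<mu> a b p \<noteq> 0} = (\<lambda>x. (x, False)) ` ?U \<union> (\<lambda>x. (x, True)) ` ?V"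
    using assms(2) by (auto simp: plotkin_word_def image_iff split: if_splits)
  also have "card \<dots> = card ?U + card ?V"
    using assms(1) by (subst card_Un_disjoint) (auto simp: card_image inj_on_def)
  finally show ?thesis .
qed

lemma sum_plotkin_word_products:
  fixes a b a' b' :: "'a::comm_ring_1 poly"
  assumes "(2::'a) = 0"
  shows "(\<Sum>p\<in>S \<times> UNIV. plotkin_word \<mu> a b p * plotkin_word \<mu> a' b' p)
           = (\<Sum>x\<in>S. \<mu> x * \<mu> x * poly (a * b' + b * a' + b * b') x)"
proof -
  have "(\<Sum>p\<in>S \<times> UNIV. plotkin_word \<mu> a b p * plotkin_word \<mu> a' b' p)
        = (\<Sum>x\<in>S. \<Sum>t\<in>UNIV. plotkin_word \<mu> a b (x, t) * plotkin_word \<mu> a' b' (x, t))"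
    by (simp add: sum.cartesian_product split_def)
  also have "\<dots> = (\<Sum>x\<in>S. \<mu> x * \<mu> x * (2 * (poly a x * poly a' x) + poly (a * b' + b * a' + b * b') x))"
    by (simp add: UNIV_bool plotkin_word_def algebra_simps del: mult_2)
  finally show ?thesis
    using assms by simp
qed

lemma sum_plotkin_word_products_eq_0:
  fixes S :: "'a::{field,finite} set" and a b a' b' :: "'a poly"
  assumes "even CARD('a)" and "\<And>x. \<mu> x * \<mu> x = poly (vanishing_poly (- S)) x"
    and "degree a < ka" "degree a' < ka" "degree b < kb" "degree b' < kb"
    and "ka + kb \<le> card S" "2 * kb \<le> card S"
  shows "(\<Sum>p\<in>S \<times> UNIV. plotkin_word \<mu> a b p * plotkin_word \<mu> a' b' p) = 0"
proof -
  have "degree (a * b') + 2 \<le> card S" "degree (b * a') + 2 \<le> card S" "degree (b * b') + 2 \<le> card S"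
    using degree_mult_le[of a b'] degree_mult_le[of b a'] degree_mult_le[of b b'] assms(3-8)
    by linarith+
  then have "degree (a * b' + b * a' + b * b') + 2 \<le> card S"
    using degree_add_le_max[of "a * b'" "b * a'"] degree_add_le_max[of "a * b' + b * a'" "b * b'"]
    by linarith
  moreover have "(\<Sum>p\<in>S \<times> UNIV. plotkin_word \<mu> a b p * plotkin_word \<mu> a' b' p)
      = (\<Sum>x\<in>S. poly (vanishing_poly (- S)) x * poly (a * b' + b * a' + b * b') x)"
    by (simp only: sum_plotkin_word_products[OF even_card_imp_two_eq_0[OF assms(1)]] assms(2))
  ultimately show ?thesis
    by (simp only: sum_vanishing_poly_mult_eq_0)
qed

definition hamming_weight :: "'a::zero ^ 'n \<Rightarrow> nat" where
  "hamming_weight x = card {i. x $ i \<noteq> 0}"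

lemma hamming_dist_eq_weight: "hamming_dist x y = hamming_weight (x - y)"
  for x y :: "'a::ab_group_add ^ 'n"
  by (simp add: hamming_dist_def hamming_weight_def)

lemma hamming_weight_vec_lambda_bij:
  assumes "bij_betw \<beta> UNIV T"
  shows "hamming_weight (\<chi> i. f (\<beta> i)) = card {p\<in>T. f p \<noteq> 0}"
proof -
  have "hamming_weight (\<chi> i. f (\<beta> i)) = card (\<beta> -` {p\<in>T. f p \<noteq> 0})"
    using assms by (auto simp: hamming_weight_def bij_betw_def intro!: arg_cong[where f = card])
  also have "\<dots> = card {p\<in>T. f p \<noteq> 0}"
    using assms by (intro card_vimage_inj) (auto simp: bij_betw_def)
  finally show ?thesis .
qed

lemma min_dist_subspace:
  fixes C :: "('a::field ^ 'n) set"
  assumes "vec.subspace C"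
  shows "min_dist C = Min {hamming_weight x | x. x \<in> C \<and> x \<noteq> 0}"
proof -
  have "{hamming_dist x y | x y. x \<in> C \<and> y \<in> C \<and> x \<noteq> y} = {hamming_weight x | x. x \<in> C \<and> x \<noteq> 0}"
  proof (intro equalityI subsetI)
    fix t
    assume "t \<in> {hamming_dist x y | x y. x \<in> C \<and> y \<in> C \<and> x \<noteq> y}"
    then obtain x y where "x \<in> C" "y \<in> C" "x \<noteq> y" "t = hamming_weight (x - y)"
      by (auto simp: hamming_dist_eq_weight)
    with vec.subspace_diff[OF assms] show "t \<in> {hamming_weight x | x. x \<in> C \<and> x \<noteq> 0}"
      by fastforce
  next
    fix t
    assume "t \<in> {hamming_weight x | x. x \<in> C \<and> x \<noteq> 0}"
    then obtain x where "x \<in> C" "x \<noteq> 0" "t = hamming_dist x 0"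
      by (auto simp: hamming_dist_eq_weight)
    with vec.subspace_0[OF assms]
    show "t \<in> {hamming_dist x y | x y. x \<in> C \<and> y \<in> C \<and> x \<noteq> y}"
      by blast
  qed
  then show ?thesis
    by (simp add: min_dist_def)
qed

lemma has_SO_code_range:
  fixes \<Phi> :: "'a::{field,finite} ^ 'k::finite \<Rightarrow> 'a ^ 'n::finite"
  assumes lin: "Vector_Spaces.linear (*s) (*s) \<Phi>"
    and "0 < d"
    and weight_ge: "\<And>c. c \<noteq> 0 \<Longrightarrow> d \<le> hamming_weight (\<Phi> c)"
    and weight_eq: "\<exists>c. c \<noteq> 0 \<and> hamming_weight (\<Phi> c) = d"
    and orth: "\<And>c c'. (\<Sum>i\<in>UNIV. \<Phi> c $ i * \<Phi> c' $ i) = 0"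
  shows "has_SO_code TYPE('a) TYPE('n) CARD('k) d"
proof -
  interpret \<Phi>: Vector_Spaces.linear "(*s)" "(*s)" \<Phi>
    by (rule lin)
  have nonzero: "\<Phi> c \<noteq> 0" if "c \<noteq> 0" for c
    using weight_ge[OF that] \<open>0 < d\<close> by (auto simp: hamming_weight_def)
  then have "inj \<Phi>"
    by (auto simp: \<Phi>.inj_iff_eq_0)
  have subspace: "vec.subspace (range \<Phi>)"
    by (rule \<Phi>.subspace_image[OF vec.subspace_UNIV])
  moreover have "vec.dim (range \<Phi>) = CARD('k)"
    using vec.dim_image_eq[OF lin, of UNIV] \<open>inj \<Phi>\<close>
    by (simp add: vec_dim_card inj_on_def card_cart_basis)
  moreover have "{hamming_weight x | x. x \<in> range \<Phi> \<and> x \<noteq> 0} = {hamming_weight (\<Phi> c) | c. c \<noteq> 0}"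
    using nonzero \<Phi>.zero by blast
  then have "min_dist (range \<Phi>) = d"
    using min_dist_subspace[OF subspace] weight_ge weight_eq by (auto intro!: Min_eqI)
  moreover have "self_orthogonal (range \<Phi>)"
    using orth by (auto simp: self_orthogonal_def euclid_dual_def)
  ultimately show ?thesis
    unfolding has_SO_code_def linear_code_def by blast
qed

section \<open>Self-orthogonal Plotkin sums of Reed-Solomon codes\<close>

definition block_poly :: "(nat \<Rightarrow> 'k) \<Rightarrow> nat \<Rightarrow> nat \<Rightarrow> 'a::comm_monoid_add ^ 'k \<Rightarrow> 'a poly" where
  "block_poly \<gamma> n k c = (\<Sum>t<k. monom (c $ \<gamma> (n + t)) t)"

lemma coeff_block_poly: "coeff (block_poly \<gamma> n k c) i = (if i < k then c $ \<gamma> (n + i) else 0)"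
  by (simp add: block_poly_def coeff_sum coeff_monom)

lemma block_poly_add:
  "block_poly \<gamma> n k (c + c') = block_poly \<gamma> n k c + block_poly \<gamma> n k c'"
  by (simp add: poly_eq_iff coeff_block_poly)

lemma block_poly_scale: "block_poly \<gamma> n k (r *s c) = smult r (block_poly \<gamma> n k c)"
  by (simp add: poly_eq_iff coeff_block_poly)

lemma block_poly_0 [simp]: "block_poly \<gamma> n k 0 = 0"
  by (simp add: poly_eq_iff coeff_block_poly)

lemma degree_block_poly_less: "0 < k \<Longrightarrow> degree (block_poly \<gamma> n k c) < k"
  using degree_le[of "k - 1" "block_poly \<gamma> n k c"] by (force simp: coeff_block_poly)

lemma block_polys_eq_0_imp_eq_0:
  assumes "\<gamma> ` {..<ka + kb} = UNIV" and "block_poly \<gamma> 0 ka c = 0" "block_poly \<gamma> ka kb c = 0"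
  shows "c = 0"
proof (rule vec_eq_iff[THEN iffD2], intro allI)
  fix i
  obtain t where t: "t < ka + kb" "i = \<gamma> t"
    using assms(1) by (metis UNIV_I imageE lessThan_iff)
  show "c $ i = 0 $ i"
  proof (cases "t < ka")
    case True
    then show ?thesis
      using t coeff_block_poly[of \<gamma> 0 ka c t] assms(2) by simp
  next
    case False
    then have "t - ka < kb" "ka + (t - ka) = t"
      using t(1) by auto
    then show ?thesis
      using t coeff_block_poly[of \<gamma> ka kb c "t - ka"] assms(3) by simp
  qed
qed

lemma exists_block_polys_eq:
  assumes "inj_on \<gamma> {..<ka + kb}" and "degree a < ka" "degree b < kb"
  shows "\<exists>c. block_poly \<gamma> 0 ka c = a \<and> block_poly \<gamma> ka kb c = b"
proof -
  define c where "c = (\<chi> i. let t = inv_into {..<ka + kb} \<gamma> i in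
                             if t < ka then coeff a t else coeff b (t - ka))"
  have "c $ \<gamma> t = (if t < ka then coeff a t else coeff b (t - ka))" if "t < ka + kb" for t
    using assms(1) that by (simp add: c_def inv_into_f_f)
  with assms(2,3) have "block_poly \<gamma> 0 ka c = a" "block_poly \<gamma> ka kb c = b"
    by (auto simp: poly_eq_iff coeff_block_poly coeff_eq_0)
  then show ?thesis
    by blast
qed

definition plotkin_encoder :: "('a \<Rightarrow> 'a) \<Rightarrow> ('n \<Rightarrow> 'a \<times> bool) \<Rightarrow> (nat \<Rightarrow> 'k) \<Rightarrow> nat \<Rightarrow> nat \<Rightarrow>
    'a::comm_ring_1 ^ 'k \<Rightarrow> 'a ^ 'n"
  where "plotkin_encoder \<mu> \<beta> \<gamma> ka kb c =
    (\<chi> i. plotkin_word \<mu> (block_poly \<gamma> 0 ka c) (block_poly \<gamma> ka kb c) (\<beta> i))"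

lemma linear_plotkin_encoder:
  "Vector_Spaces.linear (*s) (*s) (plotkin_encoder \<mu> \<beta> \<gamma> ka kb :: 'a::field ^ 'k \<Rightarrow> 'a ^ 'n)"
  by unfold_locales
    (simp_all add: plotkin_encoder_def vec_eq_iff block_poly_add block_poly_scale
      plotkin_word_add plotkin_word_smult)

lemma hamming_weight_plotkin_encoder:
  fixes S :: "'a::idom set"
  assumes "finite S" and "bij_betw \<beta> UNIV (S \<times> UNIV)" and "\<And>x. x \<in> S \<Longrightarrow> \<mu> x \<noteq> 0"
  shows "hamming_weight (plotkin_encoder \<mu> \<beta> \<gamma> ka kb c)
           = card {x\<in>S. poly (block_poly \<gamma> 0 ka c) x \<noteq> 0}
             + card {x\<in>S. poly (block_poly \<gamma> 0 ka c + block_poly \<gamma> ka kb c) x \<noteq> 0}"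
  using assms
  by (simp add: plotkin_encoder_def hamming_weight_vec_lambda_bij[OF assms(2)]
      card_plotkin_word_nonzero)

lemma inner_plotkin_encoder_eq_0:
  fixes S :: "'a::{field,finite} set"
  assumes "even CARD('a)" and "bij_betw \<beta> UNIV (S \<times> UNIV)"
    and "\<And>x. \<mu> x * \<mu> x = poly (vanishing_poly (- S)) x"
    and "0 < ka" "0 < kb" and "ka + kb \<le> card S" "2 * kb \<le> card S"
  shows "(\<Sum>i\<in>UNIV. plotkin_encoder \<mu> \<beta> \<gamma> ka kb c $ i * plotkin_encoder \<mu> \<beta> \<gamma> ka kb c' $ i) = 0"
proof -
  let ?a = "block_poly \<gamma> 0 ka" and ?b = "block_poly \<gamma> ka kb"
  have "(\<Sum>i\<in>UNIV. plotkin_encoder \<mu> \<beta> \<gamma> ka kb c $ i * plotkin_encoder \<mu> \<beta> \<gamma> ka kb c' $ i)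
      = (\<Sum>p\<in>S \<times> UNIV. plotkin_word \<mu> (?a c) (?b c) p * plotkin_word \<mu> (?a c') (?b c') p)"
    unfolding plotkin_encoder_def vec_lambda_beta by (rule sum.reindex_bij_betw[OF assms(2)])
  also have "\<dots> = 0"
    using assms(4-7) degree_block_poly_less
    by (intro sum_plotkin_word_products_eq_0[OF assms(1,3), where ka = ka and kb = kb]) auto
  finally show ?thesis .
qed

lemma plotkin_encoder_weight_ge:
  fixes S :: "'a::idom set"
  assumes "finite S" and "bij_betw \<beta> UNIV (S \<times> UNIV)" and "\<And>x. x \<in> S \<Longrightarrow> \<mu> x \<noteq> 0"
    and "\<gamma> ` {..<ka + kb} = UNIV" and "0 < ka" "0 < kb" and "c \<noteq> 0"
  shows "min (2 * (card S + 1 - ka)) (card S + 1 - kb) \<le> hamming_weight (plotkin_encoder \<mu> \<beta> \<gamma> ka kb c)"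
proof -
  have "block_poly \<gamma> 0 ka c \<noteq> 0 \<or> block_poly \<gamma> ka kb c \<noteq> 0"
    using assms(4,7) block_polys_eq_0_imp_eq_0 by blast
  then show ?thesis
    using plotkin_card_nonroots_ge[OF assms(1) degree_block_poly_less degree_block_poly_less] assms(5,6)
    by (simp add: hamming_weight_plotkin_encoder[OF assms(1-3)])
qed

lemma exists_plotkin_encoder_weight_eq:
  fixes S :: "'a::idom set"
  assumes "finite S" and "bij_betw \<beta> UNIV (S \<times> UNIV)" and "\<And>x. x \<in> S \<Longrightarrow> \<mu> x \<noteq> 0"
    and "inj_on \<gamma> {..<ka + kb}" and "0 < ka" "0 < kb" and "ka \<le> card S + 1" "kb \<le> card S + 1"
  shows "\<exists>c. c \<noteq> 0 \<and> hamming_weight (plotkin_encoder \<mu> \<beta> \<gamma> ka kb c)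
                        = min (2 * (card S + 1 - ka)) (card S + 1 - kb)"
proof -
  obtain a b where "degree a < ka" "degree b < kb" and ab: "a \<noteq> 0 \<or> b \<noteq> 0"
    and min_weight: "card {x\<in>S. poly a x \<noteq> 0} + card {x\<in>S. poly (a + b) x \<noteq> 0}
                       = min (2 * (card S + 1 - ka)) (card S + 1 - kb)"
    using plotkin_card_nonroots_attained[OF assms(1,5-8)] by blast
  then obtain c where "block_poly \<gamma> 0 ka c = a" "block_poly \<gamma> ka kb c = b"
    using exists_block_polys_eq[OF assms(4)] by blast
  moreover from this have "c \<noteq> 0"
    using ab by auto
  ultimately show ?thesis
    using min_weight by (auto simp: hamming_weight_plotkin_encoder[OF assms(1-3)])
qed

lemma has_SO_code_plotkin:
  assumes "even CARD('a::{field,finite})" and "m \<le> CARD('a)"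
    and "CARD('n::finite) = 2 * m" and "CARD('k::finite) = ka + kb"
    and "0 < ka" "0 < kb" and "ka + kb \<le> m" "2 * kb \<le> m"
  shows "has_SO_code TYPE('a) TYPE('n) CARD('k) (min (2 * (m + 1 - ka)) (m + 1 - kb))"
proof -
  obtain S :: "'a set" where S: "card S = m"
    using obtain_subset_with_card_n[of m "UNIV :: 'a set"] assms(2) by auto
  obtain \<mu> :: "'a \<Rightarrow> 'a" where \<mu>: "\<And>x. \<mu> x * \<mu> x = poly (vanishing_poly (- S)) x"
    using exists_square_root_fun[OF assms(1)] by blast
  have \<mu>_nonzero: "\<mu> x \<noteq> 0" if "x \<in> S" for x
    using \<mu>[of x] that by (auto simp: poly_vanishing_poly_eq_0_iff)
  obtain \<beta> :: "'n \<Rightarrow> 'a \<times> bool" where \<beta>: "bij_betw \<beta> UNIV (S \<times> UNIV)"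
    using assms(3) S finite_same_card_bij[of "UNIV :: 'n set" "S \<times> (UNIV :: bool set)"]
    by (auto simp: card_cartesian_product)
  obtain \<gamma> :: "nat \<Rightarrow> 'k" where \<gamma>: "bij_betw \<gamma> {..<ka + kb} UNIV"
    using assms(4) finite_same_card_bij[of "{..<ka + kb}" "UNIV :: 'k set"] by auto
  have "finite S"
    by simp
  show ?thesis
  proof (rule has_SO_code_range[OF linear_plotkin_encoder, of _ \<mu> \<beta> \<gamma> ka kb])
    show "0 < min (2 * (m + 1 - ka)) (m + 1 - kb)"
      using assms(7,8) by simp
    show "min (2 * (m + 1 - ka)) (m + 1 - kb) \<le> hamming_weight (plotkin_encoder \<mu> \<beta> \<gamma> ka kb c)"
      if "c \<noteq> 0" for c
      using plotkin_encoder_weight_ge[OF \<open>finite S\<close> \<beta> \<mu>_nonzero bij_betw_imp_surj_on[OF \<gamma>]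
          assms(5,6) that] S
      by simp
    show "\<exists>c. c \<noteq> 0 \<and>
      hamming_weight (plotkin_encoder \<mu> \<beta> \<gamma> ka kb c) = min (2 * (m + 1 - ka)) (m + 1 - kb)"
      using exists_plotkin_encoder_weight_eq[where \<mu> = \<mu>, OF \<open>finite S\<close> \<beta> \<mu>_nonzero
          bij_betw_imp_inj_on[OF \<gamma>] assms(5,6)] S assms(7)
      by simp
    show "(\<Sum>i\<in>UNIV. plotkin_encoder \<mu> \<beta> \<gamma> ka kb c $ i * plotkin_encoder \<mu> \<beta> \<gamma> ka kb c' $ i) = 0"
      for c c'
      using inner_plotkin_encoder_eq_0[OF assms(1) \<beta> \<mu> assms(5,6)] assms(7,8) S
      by simp
  qed
qed

theorem theorem15:
  fixes F4 :: "'a::{field,finite} itself" and F8 :: "'b::{field,finite} itself"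
  assumes "CARD('a) = 4" and "CARD('b) = 8"
  shows "has_SO_code TYPE('a) TYPE(8) 2 4 \<and> has_SO_code TYPE('a) TYPE(8) 3 4 \<and>
         has_SO_code TYPE('a) TYPE(8) 4 4 \<and>
         has_SO_code TYPE('b) TYPE(8) 3 4 \<and> has_SO_code TYPE('b) TYPE(8) 4 4 \<and>
         has_SO_code TYPE('b) TYPE(10) 4 5 \<and> has_SO_code TYPE('b) TYPE(10) 5 4 \<and>
         has_SO_code TYPE('b) TYPE(12) 4 6 \<and> has_SO_code TYPE('b) TYPE(12) 5 6 \<and>
         has_SO_code TYPE('b) TYPE(12) 6 5 \<and>
         has_SO_code TYPE('b) TYPE(14) 5 7 \<and> has_SO_code TYPE('b) TYPE(14) 6 6 \<and>
         has_SO_code TYPE('b) TYPE(14) 7 6 \<and>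
         has_SO_code TYPE('b) TYPE(16) 5 8 \<and> has_SO_code TYPE('b) TYPE(16) 6 8 \<and>
         has_SO_code TYPE('b) TYPE(16) 7 6 \<and> has_SO_code TYPE('b) TYPE(16) 8 6"
proof -
  \<comment> \<open>arguments of the construction: m, k_a, k_b (the length is 2m)\<close>
  have "has_SO_code TYPE('a) TYPE(8) 2 4"
    by (rule has_SO_code_plotkin[where 'k = 2, of 4 1 1, simplified]) (simp_all add: assms)
  moreover have "has_SO_code TYPE('a) TYPE(8) 3 4"
    by (rule has_SO_code_plotkin[where 'k = 3, of 4 2 1, simplified]) (simp_all add: assms)
  moreover have "has_SO_code TYPE('a) TYPE(8) 4 4"
    by (rule has_SO_code_plotkin[where 'k = 4, of 4 3 1, simplified]) (simp_all add: assms)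
  moreover have "has_SO_code TYPE('b) TYPE(8) 3 4"
    by (rule has_SO_code_plotkin[where 'k = 3, of 4 2 1, simplified]) (simp_all add: assms)
  moreover have "has_SO_code TYPE('b) TYPE(8) 4 4"
    by (rule has_SO_code_plotkin[where 'k = 4, of 4 3 1, simplified]) (simp_all add: assms)
  moreover have "has_SO_code TYPE('b) TYPE(10) 4 5"
    by (rule has_SO_code_plotkin[where 'k = 4, of 5 3 1, simplified]) (simp_all add: assms)
  moreover have "has_SO_code TYPE('b) TYPE(10) 5 4"
    by (rule has_SO_code_plotkin[where 'k = 5, of 5 3 2, simplified]) (simp_all add: assms)
  moreover have "has_SO_code TYPE('b) TYPE(12) 4 6"
    by (rule has_SO_code_plotkin[where 'k = 4, of 6 3 1, simplified]) (simp_all add: assms)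
  moreover have "has_SO_code TYPE('b) TYPE(12) 5 6"
    by (rule has_SO_code_plotkin[where 'k = 5, of 6 4 1, simplified]) (simp_all add: assms)
  moreover have "has_SO_code TYPE('b) TYPE(12) 6 5"
    by (rule has_SO_code_plotkin[where 'k = 6, of 6 4 2, simplified]) (simp_all add: assms)
  moreover have "has_SO_code TYPE('b) TYPE(14) 5 7"
    by (rule has_SO_code_plotkin[where 'k = 5, of 7 4 1, simplified]) (simp_all add: assms)
  moreover have "has_SO_code TYPE('b) TYPE(14) 6 6"
    by (rule has_SO_code_plotkin[where 'k = 6, of 7 4 2, simplified]) (simp_all add: assms)
  moreover have "has_SO_code TYPE('b) TYPE(14) 7 6"
    by (rule has_SO_code_plotkin[where 'k = 7, of 7 5 2, simplified]) (simp_all add: assms)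
  moreover have "has_SO_code TYPE('b) TYPE(16) 5 8"
    by (rule has_SO_code_plotkin[where 'k = 5, of 8 4 1, simplified]) (simp_all add: assms)
  moreover have "has_SO_code TYPE('b) TYPE(16) 6 8"
    by (rule has_SO_code_plotkin[where 'k = 6, of 8 5 1, simplified]) (simp_all add: assms)
  moreover have "has_SO_code TYPE('b) TYPE(16) 7 6"
    by (rule has_SO_code_plotkin[where 'k = 7, of 8 4 3, simplified]) (simp_all add: assms)
  moreover have "has_SO_code TYPE('b) TYPE(16) 8 6"
    by (rule has_SO_code_plotkin[where 'k = 8, of 8 5 3, simplified]) (simp_all add: assms)
  ultimately show ?thesis
    by blast
qed

end
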